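(* Let $(C,D)$ define an irreducible MSPP with $C=-\mathrm{diag}(c_1,\dots,c_p)$, $c_i>0$. Let $\kappa=\frac{\min_i c_i+\max_i c_i}{2}$ and $\gamma=\sqrt{(\min_i c_i)(\max_i c_i)}$. Then the squared coefficient of variation of the event-stationary inter-event time satisfies $$1\le c^2\le 2\frac{\kappa^2}{\gamma^2}-1 .$$
   Context: A Markovian arrival process (MAP) of order $p$ is specified by $p\times p$ real matrices $C$ and $D$ such that $D$ has nonnegative entries, $C$ has nonnegative off-diagonal entries, and $Q=C+D$ is the generator (row sums zero) of an irreducible continuous-time Markov chain on $\{1,\dots,p\}$; $C$ is assumed nonsingular. An MSPP is a MAP with $C$ diagonal. $\mathbf{1}$ is the all-ones column vector; $\boldsymbol{\pi}$ is the stationary distribution of $Q$; $\boldsymbol{\alpha}$ is the stationary distribution of $P=(-C)^{-1}D$. The event-stationary inter-event time $T_1^{\alpha}$ has $\mathbb{P}(T_1^{\alpha}>t)=\boldsymbol{\alpha}e^{Ct}\mathbf{1}$, and $c^2=\mathrm{Var}(T_1^{\alpha})/\mathbb{E}^2[T_1^{\alpha}]$, which satisfies $c^2+1=2\,\boldsymbol{\pi}C\mathbf{1}\,\boldsymbol{\pi}C^{-1}\mathbf{1}$. *)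

theory Defs
  imports "HOL-Analysis.Analysis"
begin

text \<open>Matrices of order p are real^'n^'n with p = CARD('n); row vectors are real^'n,
  acted on from the right via v*.\<close>

definition is_generator :: "real^'n::finite^'n \<Rightarrow> bool" where
  "is_generator Q \<longleftrightarrow> (\<forall>i j. i \<noteq> j \<longrightarrow> Q$i$j \<ge> 0) \<and> (\<forall>i. (\<Sum>j\<in>UNIV. Q$i$j) = 0)"

definition irreducible_gen :: "real^'n::finite^'n \<Rightarrow> bool" where
  "irreducible_gen Q \<longleftrightarrow> (\<forall>i j. (i, j) \<in> {(k, l). k \<noteq> l \<and> Q$k$l > 0}\<^sup>*)"

definition is_MAP :: "real^'n::finite^'n \<Rightarrow> real^'n^'n \<Rightarrow> bool" where
  "is_MAP C D \<longleftrightarrow> (\<forall>i j. D$i$j \<ge> 0) \<and> (\<forall>i j. i \<noteq> j \<longrightarrow> C$i$j \<ge> 0)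
     \<and> is_generator (C + D) \<and> irreducible_gen (C + D) \<and> invertible C"

definition is_MSPP :: "real^'n::finite^'n \<Rightarrow> real^'n^'n \<Rightarrow> bool" where
  "is_MSPP C D \<longleftrightarrow> is_MAP C D \<and> (\<forall>i j. i \<noteq> j \<longrightarrow> C$i$j = 0)"

definition is_distribution :: "real^'n::finite \<Rightarrow> bool" where
  "is_distribution v \<longleftrightarrow> (\<forall>i. v$i \<ge> 0) \<and> (\<Sum>i\<in>UNIV. v$i) = 1"

definition stationary_dtmc :: "real^'n::finite \<Rightarrow> real^'n^'n \<Rightarrow> bool" where
  "stationary_dtmc a P \<longleftrightarrow> is_distribution a \<and> a v* P = a"

definition neg_diag :: "('n::finite \<Rightarrow> real) \<Rightarrow> real^'n^'n" where
  "neg_diag c = (\<chi> i j. if i = j then - c i else 0)"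

text \<open>Survival function of the event-stationary inter-event time for C = -diag(c):
  alpha e^{Ct} 1 = sum_i alpha_i e^{-c_i t}.\<close>
definition mspp_surv :: "real^'n::finite \<Rightarrow> ('n \<Rightarrow> real) \<Rightarrow> real \<Rightarrow> real" where
  "mspp_surv a c t = (\<Sum>i\<in>UNIV. a$i * exp (- c i * t))"

text \<open>Moments of a nonnegative r.v. T via its survival function S:
  E[T] = int_0^inf S, E[T^2] = int_0^inf 2 t S(t) dt.\<close>
definition mean_surv :: "(real \<Rightarrow> real) \<Rightarrow> real" where
  "mean_surv S = integral {0..} S"

definition second_moment_surv :: "(real \<Rightarrow> real) \<Rightarrow> real" where
  "second_moment_surv S = integral {0..} (\<lambda>t. 2 * t * S t)"

definition scv_surv :: "(real \<Rightarrow> real) \<Rightarrow> real" where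
  "scv_surv S = (second_moment_surv S - (mean_surv S)\<^sup>2) / (mean_surv S)\<^sup>2"

end

theory Submission
  imports Defs "HOL-Real_Asymp.Real_Asymp"
begin

text \<open>Since \<open>C\<close> is diagonal, the event-stationary inter-event time is a mixture of
  exponential distributions with rates \<open>c\<^sub>i\<close> and weights \<open>\<alpha>\<^sub>i\<close>. Its first two moments are
  \<open>E X\<close> and \<open>2 E X\<^sup>2\<close> for the random variable \<open>X = 1/c\<^sub>I\<close>, \<open>I \<sim> \<alpha>\<close>, so \<open>c\<^sup>2 + 1 = 2 E X\<^sup>2 / (E X)\<^sup>2\<close>.
  The lower bound is then \<open>(E X)\<^sup>2 \<le> E X\<^sup>2\<close>, the upper bound is the Kantorovich inequality
  for \<open>X\<close> taking values in \<open>[1/max c, 1/min c]\<close>.\<close>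

lemma has_integral_mult_exp_neg:
  fixes a :: real
  assumes "a > 0"
  shows "((\<lambda>t. t * exp (- a * t)) has_integral 1 / a\<^sup>2) {0..}"
proof (intro has_integral_to_inf integrable_continuous_interval continuous_intros)
  define F where "F y = - (y / a + 1 / a\<^sup>2) * exp (- a * y)" for y
  have "((\<lambda>t. t * exp (- a * t)) has_integral F y - F 0) {0..y}" if "y \<ge> 0" for y
    unfolding F_def using that \<open>a > 0\<close>
    by (intro fundamental_theorem_of_calculus)
       (auto intro!: derivative_eq_intros
             simp flip: has_real_derivative_iff_has_vector_derivative
             simp: field_simps power2_eq_square)
  then have "\<forall>\<^sub>F y in at_top. integral {0..y} (\<lambda>t. t * exp (- a * t)) = F y + 1 / a\<^sup>2"
    by (auto simp: F_def eventually_at_top_linorder intro: exI[of _ 0])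
  moreover have "((\<lambda>y. F y + 1 / a\<^sup>2) \<longlongrightarrow> 1 / a\<^sup>2) at_top"
    unfolding F_def using \<open>a > 0\<close> by real_asymp
  ultimately show "((\<lambda>y. integral {0..y} (\<lambda>t. t * exp (- a * t))) \<longlongrightarrow> 1 / a\<^sup>2) at_top"
    by (simp add: filterlim_cong)
qed auto

lemma mean_surv_mspp_surv:
  assumes "\<And>i. c i > 0"
  shows "mean_surv (mspp_surv a c) = (\<Sum>i\<in>UNIV. a$i / c i)"
proof -
  have "((\<lambda>t. \<Sum>i\<in>UNIV. a$i * exp (- c i * t))
          has_integral (\<Sum>i\<in>UNIV. a$i * (exp (- c i * 0) / c i))) {0..}"
    by (intro has_integral_sum has_integral_mult_right has_integral_exp_minus_to_infinity assms)
       auto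
  then show ?thesis
    unfolding mean_surv_def mspp_surv_def by (simp add: integral_unique)
qed

lemma second_moment_surv_mspp_surv:
  assumes "\<And>i. c i > 0"
  shows "second_moment_surv (mspp_surv a c) = 2 * (\<Sum>i\<in>UNIV. a$i / (c i)\<^sup>2)"
proof -
  have "((\<lambda>t. \<Sum>i\<in>UNIV. (2 * a$i) * (t * exp (- c i * t)))
          has_integral (\<Sum>i\<in>UNIV. (2 * a$i) * (1 / (c i)\<^sup>2))) {0..}"
    by (intro has_integral_sum has_integral_mult_right has_integral_mult_exp_neg assms) auto
  moreover have "(\<lambda>t. 2 * t * mspp_surv a c t)
                   = (\<lambda>t. \<Sum>i\<in>UNIV. (2 * a$i) * (t * exp (- c i * t)))"
    unfolding mspp_surv_def by (auto simp: sum_distrib_left intro!: sum.cong)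
  ultimately show ?thesis
    unfolding second_moment_surv_def by (simp add: integral_unique sum_distrib_left)
qed

lemma scv_surv_eq:
  assumes "mean_surv S \<noteq> 0"
  shows "scv_surv S = second_moment_surv S / (mean_surv S)\<^sup>2 - 1"
  using assms by (simp add: scv_surv_def diff_divide_distrib)

lemma is_distribution_weighted_sum_pos:
  assumes "is_distribution a" and "\<And>i. x i > 0"
  shows "(\<Sum>i\<in>UNIV. a$i * x i) > 0"
proof -
  have a: "\<And>i. a$i \<ge> 0" "(\<Sum>i\<in>UNIV. a$i) = 1"
    using assms(1) by (auto simp: is_distribution_def)
  then obtain j where "a$j \<noteq> 0" by force
  then show ?thesis
    using a(1) assms(2) by (intro sum_pos2[of UNIV j]) (auto simp: order_less_le)
qed

lemma scv_surv_mspp_surv: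
  assumes "\<And>i. c i > 0" and "is_distribution a"
  shows "scv_surv (mspp_surv a c)
           = 2 * (\<Sum>i\<in>UNIV. a$i * (1 / c i)\<^sup>2) / (\<Sum>i\<in>UNIV. a$i * (1 / c i))\<^sup>2 - 1"
  using is_distribution_weighted_sum_pos[OF assms(2), of "\<lambda>i. 1 / c i"] assms(1)
  by (simp add: scv_surv_eq mean_surv_mspp_surv second_moment_surv_mspp_surv power_divide)

lemma weighted_mean_square_le:
  fixes w x :: "'a \<Rightarrow> real"
  assumes "finite A" and "\<And>i. i \<in> A \<Longrightarrow> w i \<ge> 0" and "sum w A = 1"
  shows "(\<Sum>i\<in>A. w i * x i)\<^sup>2 \<le> (\<Sum>i\<in>A. w i * (x i)\<^sup>2)"
proof -
  define \<mu> where "\<mu> = (\<Sum>i\<in>A. w i * x i)"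
  have "0 \<le> (\<Sum>i\<in>A. w i * (x i - \<mu>)\<^sup>2)"
    using assms(2) by (intro sum_nonneg) auto
  also have "\<dots> = (\<Sum>i\<in>A. w i * (x i)\<^sup>2) - 2 * \<mu> * (\<Sum>i\<in>A. w i * x i) + \<mu>\<^sup>2 * sum w A"
    by (simp add: power2_eq_square algebra_simps sum.distrib sum_subtractf sum_distrib_left)
  finally show ?thesis
    using assms(3) by (simp add: \<mu>_def power2_eq_square)
qed

text \<open>Pointwise \<open>(x - p) (q - x) \<ge> 0\<close> bounds the second
  moment by an affine function of the mean, and AM-GM bounds that by the squared mean.\<close>

lemma kantorovich_inequality:
  fixes w x :: "'a \<Rightarrow> real"
  assumes "finite A" and "\<And>i. i \<in> A \<Longrightarrow> w i \<ge> 0" and "sum w A = 1"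
    and "p > 0" and "\<And>i. i \<in> A \<Longrightarrow> p \<le> x i" and "\<And>i. i \<in> A \<Longrightarrow> x i \<le> q"
  shows "(\<Sum>i\<in>A. w i * (x i)\<^sup>2) \<le> (p + q)\<^sup>2 / (4 * p * q) * (\<Sum>i\<in>A. w i * x i)\<^sup>2"
proof -
  define \<mu> where "\<mu> = (\<Sum>i\<in>A. w i * x i)"
  have "(\<Sum>i\<in>A. w i * (x i)\<^sup>2) \<le> (\<Sum>i\<in>A. w i * ((p + q) * x i - p * q))"
  proof (intro sum_mono mult_left_mono)
    fix i assume "i \<in> A"
    then have "0 \<le> (x i - p) * (q - x i)"
      using assms(5,6) by (intro mult_nonneg_nonneg) auto
    then show "(x i)\<^sup>2 \<le> (p + q) * x i - p * q"
      by (simp add: power2_eq_square algebra_simps)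
  qed (use assms(2) in auto)
  also have "\<dots> = (p + q) * \<mu> - p * q * sum w A"
    by (simp add: \<mu>_def algebra_simps sum_subtractf sum_distrib_left)
  also have "\<dots> = (p + q) * \<mu> - p * q"
    using assms(3) by simp
  also have "\<dots> \<le> (p + q)\<^sup>2 / (4 * p * q) * \<mu>\<^sup>2"
  proof -
    from assms(3) obtain i where "i \<in> A" by fastforce
    then have "q > 0" using assms(4-6) by force
    have "4 * p * q * ((p + q) * \<mu> - p * q) \<le> (p + q)\<^sup>2 * \<mu>\<^sup>2"
      using sum_squares_ge_zero[of "(p + q) * \<mu> - 2 * p * q" 0]
      by (simp add: power2_eq_square algebra_simps)
    then show ?thesis
      using \<open>p > 0\<close> \<open>q > 0\<close> by (simp add: field_simps)
  qed
  finally show ?thesis unfolding \<mu>_def .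
qed

theorem proposition4:
  fixes c :: "'n::finite \<Rightarrow> real" and D :: "real^'n^'n" and \<alpha> :: "real^'n"
  assumes "\<And>i. c i > 0"
    and "is_MSPP (neg_diag c) D"
    and "stationary_dtmc \<alpha> (matrix_inv (- neg_diag c) ** D)"
  shows "1 \<le> scv_surv (mspp_surv \<alpha> c)
       \<and> scv_surv (mspp_surv \<alpha> c)
           \<le> 2 * (((Min (range c) + Max (range c)) / 2)\<^sup>2
                 / (sqrt (Min (range c) * Max (range c)))\<^sup>2) - 1"
proof -
  define m M where "m = Min (range c)" and "M = Max (range c)"
  have "m \<in> range c" unfolding m_def by (rule Min_in) auto
  then have "m > 0" using assms(1) by auto
  have "M \<ge> m" unfolding m_def M_def by (auto simp: Min_le_iff Max_ge_iff)
  have \<alpha>: "is_distribution \<alpha>"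
    using assms(3) by (simp add: stationary_dtmc_def)
  define \<mu> \<sigma> where "\<mu> = (\<Sum>i\<in>UNIV. \<alpha>$i * (1 / c i))"
    and "\<sigma> = (\<Sum>i\<in>UNIV. \<alpha>$i * (1 / c i)\<^sup>2)"
  have "\<mu> > 0"
    unfolding \<mu>_def using assms(1) by (intro is_distribution_weighted_sum_pos \<alpha>) simp
  have bounds: "1 / M \<le> 1 / c i" "1 / c i \<le> 1 / m" for i
    using assms(1)[of i] \<open>m > 0\<close> by (auto simp: m_def M_def frac_le)
  define \<kappa>\<gamma> where "\<kappa>\<gamma> = ((m + M) / 2)\<^sup>2 / (sqrt (m * M))\<^sup>2"
  have "\<mu>\<^sup>2 \<le> \<sigma>"
    unfolding \<mu>_def \<sigma>_def using \<alpha>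
    by (intro weighted_mean_square_le) (auto simp: is_distribution_def)
  moreover have "\<sigma> \<le> (1 / M + 1 / m)\<^sup>2 / (4 * (1 / M) * (1 / m)) * \<mu>\<^sup>2"
    unfolding \<mu>_def \<sigma>_def using \<alpha> bounds \<open>M \<ge> m\<close> \<open>m > 0\<close>
    by (intro kantorovich_inequality) (auto simp: is_distribution_def)
  moreover have "(1 / M + 1 / m)\<^sup>2 / (4 * (1 / M) * (1 / m)) = \<kappa>\<gamma>"
    unfolding \<kappa>\<gamma>_def using \<open>M \<ge> m\<close> \<open>m > 0\<close> by (simp add: field_simps power2_eq_square)
  ultimately have "1 \<le> \<sigma> / \<mu>\<^sup>2" "\<sigma> / \<mu>\<^sup>2 \<le> \<kappa>\<gamma>"
    using \<open>\<mu> > 0\<close> by (simp_all add: pos_le_divide_eq pos_divide_le_eq)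
  then show ?thesis
    using scv_surv_mspp_surv[OF assms(1) \<alpha>]
    unfolding \<mu>_def \<sigma>_def \<kappa>\<gamma>_def m_def M_def by simp
qed

end
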